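(* Let $G_s$ be a causal graph over a set of variables $V$ (with treatment $X$ and outcome $Y$) augmented with a selection node $S$, and let $T(G_s)$ be its twin network (defined in the context). Suppose there exists a subset $Z\subseteq V$ that is measured both in the biased (selected, $S=1$) experiment and at the population level (so that $P(Z)$ is available), and that $Y^*_{X^*}\perp\!\!\!\perp S \mid Z$ (d-separation in $T(G_s)$). Then the experimental distribution is s-recoverable and $$P(Y^*_{X^*}) = \sum_{z} P(Y^*_{X^*}\mid Z=z, S=1)\,P(Z=z).$$
   Context: Selection-augmented graph: $G_s$ is a causal DAG over variables $V$ together with an additional binary node $S$ ($S=1$ means included in the sample), with directed edges into $S$ from the variables influencing sample inclusion; each endogenous node $V_i$ (including $S$) has its own exogenous variable $U_{V_i}$. Twin network $T(G_s)$: take $G_s$ with its exogenous variables, add a counterfactual copy $V_i^*$ of each endogenous node (including $S^*$) with the same edges among the copies, let each $V_i^*$ share the exogenous parent $U_{V_i}$ of $V_i$, and remove all edges entering the counterfactual treatment node $X^*$ (intervention $do(X^*=x)$). $Y^*_{X^*}$ is the counterfactual outcome node, with $P(Y^*_{X^*=x}=y)=P(Y=y\mid do(X=x))$ the experimental distribution; $P(Y^*_{X^*}\mid \cdot, S=1)$ is the experimental distribution in the selected subpopulation. Conditional independences involving $Y^*_{X^*}$ and $S$ are d-separation statements in $T(G_s)$. s-recoverability means $P(Y^*_{X^*})$ is uniquely determined (for all distributions compatible with $G_s$) by the biased experimental distribution given $S=1$ and the available unbiased population distribution. *)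

theory Defs
  imports "HOL-Probability.Probability"
begin

definition is_path :: "('n \<times> 'n) set \<Rightarrow> 'n list \<Rightarrow> bool" where
  "is_path E ps \<longleftrightarrow> ps \<noteq> [] \<and> distinct ps \<and>
     (\<forall>i. Suc i < length ps \<longrightarrow> (ps ! i, ps ! Suc i) \<in> E \<or> (ps ! Suc i, ps ! i) \<in> E)"

definition collider_at :: "('n \<times> 'n) set \<Rightarrow> 'n list \<Rightarrow> nat \<Rightarrow> bool" where
  "collider_at E ps i \<longleftrightarrow> 0 < i \<and> Suc i < length ps \<and>
     (ps ! (i - 1), ps ! i) \<in> E \<and> (ps ! Suc i, ps ! i) \<in> E"

definition active_path :: "('n \<times> 'n) set \<Rightarrow> 'n set \<Rightarrow> 'n list \<Rightarrow> bool" where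
  "active_path E C ps \<longleftrightarrow> is_path E ps \<and>
     (\<forall>i. 0 < i \<and> Suc i < length ps \<longrightarrow>
        (if collider_at E ps i then (\<exists>d. (ps ! i, d) \<in> E\<^sup>* \<and> d \<in> C) else ps ! i \<notin> C))"

definition d_separated :: "('n \<times> 'n) set \<Rightarrow> 'n set \<Rightarrow> 'n set \<Rightarrow> 'n set \<Rightarrow> bool" where
  "d_separated E A B C \<longleftrightarrow> \<not> (\<exists>ps. active_path E C ps \<and> hd ps \<in> A \<and> last ps \<in> B)"

text \<open>Nodes of the twin network: factual copy, counterfactual copy, and the
  (shared) exogenous parent of each endogenous node.\<close>
datatype 'v tnode = Fact 'v | Cf 'v | Ex 'v

definition twin_edges :: "'v set \<Rightarrow> ('v \<times> 'v) set \<Rightarrow> 'v \<Rightarrow> ('v tnode \<times> 'v tnode) set" where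
  "twin_edges N E X =
     {(Ex v, Fact v) | v. v \<in> N} \<union> {(Ex v, Cf v) | v. v \<in> N \<and> v \<noteq> X} \<union>
     {(Fact a, Fact b) | a b. (a, b) \<in> E} \<union> {(Cf a, Cf b) | a b. (a, b) \<in> E \<and> b \<noteq> X}"

text \<open>Structural equations f v (values of endogenous variables) (value of U_v);
  compatibility: f v depends only on the parents of v.\<close>
definition compatible ::
  "'v set \<Rightarrow> ('v \<times> 'v) set \<Rightarrow> ('v \<Rightarrow> ('v \<Rightarrow> 'a) \<Rightarrow> 'u \<Rightarrow> 'a) \<Rightarrow> bool" where
  "compatible N E f \<longleftrightarrow> (\<forall>v\<in>N. \<forall>w w' uu. (\<forall>p. (p, v) \<in> E \<longrightarrow> w p = w' p) \<longrightarrow> f v w uu = f v w' uu)"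

text \<open>The (unique, by acyclicity) solution of the structural equations for exogenous values u.\<close>
definition solution :: "'v set \<Rightarrow> ('v \<Rightarrow> ('v \<Rightarrow> 'a) \<Rightarrow> 'u \<Rightarrow> 'a) \<Rightarrow> ('v \<Rightarrow> 'u) \<Rightarrow> ('v \<Rightarrow> 'a)" where
  "solution N f u = (THE w. w \<in> extensional N \<and> (\<forall>v\<in>N. w v = f v w (u v)))"

definition do_eq :: "'v \<Rightarrow> 'a \<Rightarrow> ('v \<Rightarrow> ('v \<Rightarrow> 'a) \<Rightarrow> 'u \<Rightarrow> 'a) \<Rightarrow> ('v \<Rightarrow> ('v \<Rightarrow> 'a) \<Rightarrow> 'u \<Rightarrow> 'a)" where
  "do_eq X x f = (\<lambda>v w uu. if v = X then x else f v w uu)"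

definition exo_dist :: "'v set \<Rightarrow> ('v \<Rightarrow> 'u pmf) \<Rightarrow> ('v \<Rightarrow> 'u) pmf" where
  "exo_dist N Pu = Pi_pmf N undefined Pu"

text \<open>Joint distribution of (factual world, counterfactual world under do(X*=x))
  in the twin network: both worlds share the exogenous variables.\<close>
definition twin_dist ::
  "'v set \<Rightarrow> ('v \<Rightarrow> 'u pmf) \<Rightarrow> ('v \<Rightarrow> ('v \<Rightarrow> 'a) \<Rightarrow> 'u \<Rightarrow> 'a) \<Rightarrow> 'v \<Rightarrow> 'a \<Rightarrow> (('v \<Rightarrow> 'a) \<times> ('v \<Rightarrow> 'a)) pmf" where
  "twin_dist N Pu f X x = map_pmf (\<lambda>u. (solution N f u, solution N (do_eq X x f) u)) (exo_dist N Pu)"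

definition obs_dist :: "'v set \<Rightarrow> ('v \<Rightarrow> 'u pmf) \<Rightarrow> ('v \<Rightarrow> ('v \<Rightarrow> 'a) \<Rightarrow> 'u \<Rightarrow> 'a) \<Rightarrow> ('v \<Rightarrow> 'a) pmf" where
  "obs_dist N Pu f = map_pmf (solution N f) (exo_dist N Pu)"

definition P_exp where
  "P_exp N Pu f X Y x y = measure_pmf.prob (twin_dist N Pu f X x) {p. snd p Y = y}"

definition P_Z where
  "P_Z N Pu f Z z = measure_pmf.prob (obs_dist N Pu f) {w. \<forall>v\<in>Z. w v = z v}"

definition P_ZS where
  "P_ZS N Pu f Z S s1 z = measure_pmf.prob (obs_dist N Pu f) {w. (\<forall>v\<in>Z. w v = z v) \<and> w S = s1}"

definition P_exp_cond_ZS where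
  "P_exp_cond_ZS N Pu f X Y Z S s1 x y z =
     measure_pmf.prob (twin_dist N Pu f X x) {p. snd p Y = y \<and> (\<forall>v\<in>Z. fst p v = z v) \<and> fst p S = s1}
     / measure_pmf.prob (twin_dist N Pu f X x) {p. (\<forall>v\<in>Z. fst p v = z v) \<and> fst p S = s1}"

definition P_biased where
  "P_biased N Pu f X Y Z S s1 x y z =
     measure_pmf.prob (twin_dist N Pu f X x) {p. snd p Y = y \<and> (\<forall>v\<in>Z. fst p v = z v) \<and> fst p S = s1}
     / measure_pmf.prob (twin_dist N Pu f X x) {p. fst p S = s1}"

definition positive where
  "positive N Pu f Z S s1 \<longleftrightarrow> (\<forall>z. P_Z N Pu f Z z > 0 \<longrightarrow> P_ZS N Pu f Z S s1 z > 0)"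

definition admissible where
  "admissible N E Z S s1 Pu f \<longleftrightarrow> compatible N E f \<and> positive N Pu f Z S s1"

text \<open>The itself-argument fixes the type of exogenous values.\<close>
definition s_recoverable ::
  "'u itself \<Rightarrow> 'v set \<Rightarrow> ('v \<times> 'v) set \<Rightarrow> 'v \<Rightarrow> 'v \<Rightarrow> 'v set \<Rightarrow> 'v \<Rightarrow> 'a \<Rightarrow> bool" where
  "s_recoverable uty N E X Y Z S s1 \<longleftrightarrow>
     (\<forall>(Pu1 :: 'v \<Rightarrow> 'u pmf) f1 (Pu2 :: 'v \<Rightarrow> 'u pmf) f2.
        admissible N E Z S s1 Pu1 f1 \<and> admissible N E Z S s1 Pu2 f2 \<and>
        (\<forall>x y z. P_biased N Pu1 f1 X Y Z S s1 x y z = P_biased N Pu2 f2 X Y Z S s1 x y z) \<and>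
        (\<forall>z. P_Z N Pu1 f1 Z z = P_Z N Pu2 f2 Z z)
        \<longrightarrow> (\<forall>x y. P_exp N Pu1 f1 X Y x y = P_exp N Pu2 f2 X Y x y))"

end

theory Submission
  imports Defs
begin

(* Fix the value z in every structural equation that reads a variable of Z. On the event Z = z
   the factual world solves these modified equations, in which a variable depends only on the
   exogenous variables of its ancestors along Z-avoiding paths. Close the exogenous parents that
   Y* depends on under "being Z-avoiding ancestors of a common node of Z". No Z-avoiding ancestor
   of S lies in this block: the walk from Y* through the block to S would be active given Z, and
   removing its loops gives an active path, contradicting the d-separation. So, given Z = z,
   Y* and S are functions of two independent blocks of exogenous variables, whence Y* and S are
   independent given Z. Summing P(Y* = y | Z = z, S = 1) P(Z = z) over z yields P(Y* = y), and
   P(Y* = y | Z = z, S = 1) is the biased joint P(Y* = y, Z = z | S = 1) normalised over y. *)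

section \<open>Active walks\<close>

definition adjacent :: "('n \<times> 'n) set \<Rightarrow> 'n \<Rightarrow> 'n \<Rightarrow> bool" where
  "adjacent E a b \<longleftrightarrow> (a, b) \<in> E \<or> (b, a) \<in> E"

definition has_descendant_in :: "('n \<times> 'n) set \<Rightarrow> 'n set \<Rightarrow> 'n \<Rightarrow> bool" where
  "has_descendant_in E C x \<longleftrightarrow> (\<exists>d. (x, d) \<in> E\<^sup>* \<and> d \<in> C)"

definition open_triple :: "('n \<times> 'n) set \<Rightarrow> 'n set \<Rightarrow> 'n \<Rightarrow> 'n \<Rightarrow> 'n \<Rightarrow> bool" where
  "open_triple E C a b c \<longleftrightarrow>
     (if (a, b) \<in> E \<and> (c, b) \<in> E then has_descendant_in E C b else b \<notin> C)"

fun active_walk :: "('n \<times> 'n) set \<Rightarrow> 'n set \<Rightarrow> 'n list \<Rightarrow> bool" where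
  "active_walk E C [] \<longleftrightarrow> False"
| "active_walk E C [a] \<longleftrightarrow> True"
| "active_walk E C [a, b] \<longleftrightarrow> adjacent E a b"
| "active_walk E C (a # b # c # rest) \<longleftrightarrow>
     adjacent E a b \<and> open_triple E C a b c \<and> active_walk E C (b # c # rest)"

lemma active_walk_Cons_Cons:
  "active_walk E C (a # b # rest) \<longleftrightarrow>
     adjacent E a b \<and> (rest \<noteq> [] \<longrightarrow> open_triple E C a b (hd rest)) \<and> active_walk E C (b # rest)"
  by (cases rest) auto

lemma active_walk_append:
  "active_walk E C (xs @ x # zs) \<longleftrightarrow>
     active_walk E C (xs @ [x]) \<and> active_walk E C (x # zs) \<and>
     (xs \<noteq> [] \<and> zs \<noteq> [] \<longrightarrow> open_triple E C (last xs) x (hd zs))"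
proof (induction xs)
  case (Cons a xs)
  show ?case
  proof (cases xs)
    case (Cons b xs')
    have "hd (xs' @ x # zs) = hd (xs' @ [x])" by (cases xs') auto
    with Cons.IH show ?thesis
      unfolding Cons by (simp only: append_Cons active_walk_Cons_Cons) auto
  qed (cases zs; auto)
qed simp

lemma active_walk_snoc:
  assumes "active_walk E C (ps @ [p, t])" and "adjacent E t q" and "open_triple E C p t q"
  shows "active_walk E C (ps @ [p, t, q])"
proof -
  from assms have "active_walk E C ((ps @ [p]) @ t # [q])"
    by (intro active_walk_append[THEN iffD2]) auto
  then show ?thesis by (simp only: append_assoc append_Cons append_Nil)
qed

lemma active_walk_adjacent_nth:
  "active_walk E C ps \<Longrightarrow> Suc i < length ps \<Longrightarrow> adjacent E (ps ! i) (ps ! Suc i)"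
proof (induction ps arbitrary: i rule: induct_list012)
  case (3 a b rest)
  then show ?case by (cases i) (auto simp: active_walk_Cons_Cons)
qed auto

lemma active_walk_open_triple_nth:
  "active_walk E C ps \<Longrightarrow> Suc (Suc i) < length ps \<Longrightarrow>
     open_triple E C (ps ! i) (ps ! Suc i) (ps ! Suc (Suc i))"
proof (induction ps arbitrary: i rule: induct_list012)
  case (3 a b rest)
  then show ?case by (cases i; cases rest) (auto simp: active_walk_Cons_Cons)
qed auto

lemma active_walk_directed_or_descendant:
  "active_walk E C (a # b # rest) \<Longrightarrow> (a, b) \<in> E \<Longrightarrow>
     (a, last (b # rest)) \<in> E\<^sup>+ \<or> has_descendant_in E C a"
proof (induction rest arbitrary: a b)
  case (Cons c rest)
  show ?case
  proof (cases "(c, b) \<in> E")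
    case True
    with Cons.prems have "has_descendant_in E C b" by (simp add: open_triple_def)
    with Cons.prems(2) show ?thesis
      unfolding has_descendant_in_def by (meson converse_rtrancl_into_rtrancl r_into_rtrancl)
  next
    case False
    with Cons.prems(1) have "(b, c) \<in> E" by (simp add: adjacent_def active_walk_Cons_Cons)
    with Cons.IH[of b c] Cons.prems show ?thesis
      unfolding has_descendant_in_def
      by (metis active_walk.simps(4) converse_rtrancl_into_rtrancl last_ConsR list.distinct(1)
          trancl_into_trancl2)
  qed
qed auto

lemma active_walk_remove_loop:
  assumes acyc: "acyclic E" and walk: "active_walk E C (xs @ x # ys @ x # zs)"
  shows "active_walk E C (xs @ x # zs)"
proof -
  from walk have prefix: "active_walk E C (xs @ [x])" and loop: "active_walk E C (x # ys @ x # zs)"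
    and enter: "xs \<noteq> [] \<Longrightarrow> open_triple E C (last xs) x (hd (ys @ x # zs))"
    using active_walk_append[of E C xs x "ys @ x # zs"] by auto
  from loop have cycle: "active_walk E C (x # ys @ [x])" and suffix: "active_walk E C (x # zs)"
    and leave: "zs \<noteq> [] \<Longrightarrow> open_triple E C (last (x # ys)) x (hd zs)"
    using active_walk_append[of E C "x # ys" x zs] by auto
  obtain y ys' where ys: "ys = y # ys'"
    using cycle acyc by (cases ys) (auto simp: adjacent_def acyclic_def)
  have "open_triple E C (last xs) x (hd zs)" if "xs \<noteq> []" "zs \<noteq> []"
  proof (cases "(last xs, x) \<in> E \<and> (hd zs, x) \<in> E")
    case True
    have "has_descendant_in E C x"
    proof (cases "(y, x) \<in> E")
      case True
      with enter \<open>xs \<noteq> []\<close> \<open>(last xs, x) \<in> E \<and> _\<close> show ?thesis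
        by (simp add: ys open_triple_def)
    next
      case False
      with cycle have "(x, y) \<in> E" by (simp add: ys adjacent_def active_walk_Cons_Cons)
      with cycle acyc show ?thesis
        using active_walk_directed_or_descendant[of E C x y "ys' @ [x]"]
        by (auto simp: ys acyclic_def)
    qed
    with True show ?thesis by (simp add: open_triple_def)
  next
    case False
    \<comment> \<open>if x were in C, both the entering and the leaving triple would be colliders at x\<close>
    with enter leave that have "x \<notin> C"
      by (auto simp: ys open_triple_def has_descendant_in_def split: if_splits)
    with False show ?thesis by (auto simp: open_triple_def)
  qed
  with prefix suffix show ?thesis
    using active_walk_append[of E C xs x zs] by blast
qed

lemma active_walk_imp_active_path:
  assumes "acyclic E" and "active_walk E C ps"
  shows "\<exists>ps'. active_path E C ps' \<and> hd ps' = hd ps \<and> last ps' = last ps"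
  using assms(2)
proof (induction "length ps" arbitrary: ps rule: less_induct)
  case less
  show ?case
  proof (cases "distinct ps")
    case True
    have "active_path E C ps"
      unfolding active_path_def is_path_def
    proof (intro conjI allI impI)
      show "ps \<noteq> []" using less.prems by auto
      show "distinct ps" by fact
    next
      fix i assume "Suc i < length ps"
      then show "(ps ! i, ps ! Suc i) \<in> E \<or> (ps ! Suc i, ps ! i) \<in> E"
        using active_walk_adjacent_nth[OF less.prems] by (simp add: adjacent_def)
    next
      fix i assume i: "0 < i \<and> Suc i < length ps"
      then have "open_triple E C (ps ! (i - 1)) (ps ! i) (ps ! Suc i)"
        using active_walk_open_triple_nth[OF less.prems, of "i - 1"] by simp
      with i show "if collider_at E ps i then \<exists>d. (ps ! i, d) \<in> E\<^sup>* \<and> d \<in> C else ps ! i \<notin> C"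
        by (auto simp: collider_at_def open_triple_def has_descendant_in_def split: if_splits)
    qed
    then show ?thesis by blast
  next
    case False
    then obtain xs ys zs x where ps: "ps = xs @ [x] @ ys @ [x] @ zs"
      using not_distinct_decomp by blast
    with less.prems have "active_walk E C (xs @ x # zs)"
      using active_walk_remove_loop[OF assms(1)] by simp
    moreover have "length (xs @ x # zs) < length ps" by (simp add: ps)
    ultimately obtain ps' where "active_path E C ps'"
      "hd ps' = hd (xs @ x # zs)" "last ps' = last (xs @ x # zs)"
      using less.hyps by blast
    moreover have "hd (xs @ x # zs) = hd ps" by (cases xs) (simp_all add: ps)
    moreover have "last (xs @ x # zs) = last ps" by (cases zs) (simp_all add: ps)
    ultimately show ?thesis by metis
  qed
qed

section \<open>Solutions of acyclic structural equations\<close>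

lemma compatibleD:
  "compatible N E g \<Longrightarrow> v \<in> N \<Longrightarrow> (\<And>p. (p, v) \<in> E \<Longrightarrow> s p = s' p) \<Longrightarrow> g v s uu = g v s' uu"
  unfolding compatible_def by blast

lemma compatible_mono: "compatible N E f \<Longrightarrow> E \<subseteq> E' \<Longrightarrow> compatible N E' f"
  unfolding compatible_def by blast

lemma solutions_agree_on_ancestors:
  assumes wf: "wf E" and EN: "E \<subseteq> N \<times> N" and cp: "compatible N E g"
    and s: "\<forall>v\<in>N. s v = g v s (u v)" and s': "\<forall>v\<in>N. s' v = g v s' (u' v)"
    and "v \<in> N" and "\<forall>a. (a, v) \<in> E\<^sup>* \<longrightarrow> (\<forall>w. g a w (u a) = g a w (u' a))"
  shows "s v = s' v"
  using assms(6,7)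
proof (induction v rule: wf_induct_rule[OF wf])
  case (1 v)
  have "s p = s' p" if "(p, v) \<in> E" for p
  proof (rule 1(1)[OF that])
    show "p \<in> N" using that EN by blast
    show "\<forall>a. (a, p) \<in> E\<^sup>* \<longrightarrow> (\<forall>w. g a w (u a) = g a w (u' a))"
      using 1(3) that by (meson rtrancl_into_rtrancl)
  qed
  with cp \<open>v \<in> N\<close> have "g v s (u v) = g v s' (u v)"
    by (rule compatibleD)
  with 1 s s' show ?case by simp
qed

lemma solution_exists:
  assumes wf: "wf E" and EN: "E \<subseteq> N \<times> N" and cp: "compatible N E g"
  shows "\<exists>s\<in>extensional N. \<forall>v\<in>N. s v = g v s (u v)"
proof -
  define r where "r = wfrec E (\<lambda>rec v. g v rec (u v))"
  have r: "r v = g v r (u v)" if "v \<in> N" for v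
  proof -
    have "r v = g v (cut r E v) (u v)" unfolding r_def by (subst wfrec[OF wf]) simp
    also have "\<dots> = g v r (u v)"
      using cp that by (rule compatibleD) (simp add: cut_apply)
    finally show ?thesis .
  qed
  have "g v (restrict r N) (u v) = g v r (u v)" if "v \<in> N" for v
    using cp that by (rule compatibleD) (use EN in auto)
  with r show ?thesis by (intro bexI[of _ "restrict r N"]) auto
qed

lemma solution_eqI:
  assumes wf: "wf E" and EN: "E \<subseteq> N \<times> N" and cp: "compatible N E g"
    and "s \<in> extensional N" and "\<forall>v\<in>N. s v = g v s (u v)"
  shows "solution N g u = s"
  unfolding solution_def
proof (rule the_equality)
  fix s' assume "s' \<in> extensional N \<and> (\<forall>v\<in>N. s' v = g v s' (u v))"
  with assms show "s' = s"
    using solutions_agree_on_ancestors[OF wf EN cp, of s' u s u]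
    by (intro extensionalityI[of _ N]) auto
qed (use assms in blast)

lemma solution_equation:
  assumes wf: "wf E" and EN: "E \<subseteq> N \<times> N" and cp: "compatible N E g" and "v \<in> N"
  shows "solution N g u v = g v (solution N g u) (u v)"
  using solution_exists[OF wf EN cp] solution_eqI[OF wf EN cp] assms(4) by metis

lemma solution_cong_ancestors:
  assumes wf: "wf E" and EN: "E \<subseteq> N \<times> N" and cp: "compatible N E g" and "v \<in> N"
    and "\<forall>a. (a, v) \<in> E\<^sup>* \<longrightarrow> (\<forall>w. g a w (u a) = g a w (u' a))"
  shows "solution N g u v = solution N g u' v"
  using solutions_agree_on_ancestors[OF wf EN cp _ _ assms(4,5)] solution_equation[OF wf EN cp]
  by blast

lemma solution_extensional:
  assumes "wf E" and "E \<subseteq> N \<times> N" and "compatible N E g"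
  shows "solution N g u \<in> extensional N"
  using solution_exists[OF assms] solution_eqI[OF assms] by metis

definition fix_parents ::
  "'v set \<Rightarrow> ('v \<Rightarrow> 'a) \<Rightarrow> ('v \<Rightarrow> ('v \<Rightarrow> 'a) \<Rightarrow> 'u \<Rightarrow> 'a) \<Rightarrow> ('v \<Rightarrow> ('v \<Rightarrow> 'a) \<Rightarrow> 'u \<Rightarrow> 'a)" where
  "fix_parents Z w f = (\<lambda>v s uu. f v (\<lambda>p. if p \<in> Z then w p else s p) uu)"

lemma compatible_fix_parents:
  "compatible N E f \<Longrightarrow> compatible N {(a, b) \<in> E. a \<notin> Z} (fix_parents Z w f)"
  unfolding compatible_def fix_parents_def by auto

lemma compatible_do_eq:
  "compatible N E f \<Longrightarrow> compatible N {(a, b) \<in> E. b \<noteq> X} (do_eq X x f)"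
  unfolding compatible_def do_eq_def by auto

lemma fix_parents_agrees:
  assumes "\<forall>z\<in>Z. s z = w z"
  shows "fix_parents Z w f v s = f v s"
proof -
  have "(\<lambda>p. if p \<in> Z then w p else s p) = s" using assms by auto
  then show ?thesis by (simp add: fix_parents_def)
qed

lemma
  assumes wf: "wf E" and EN: "E \<subseteq> N \<times> N" and cp: "compatible N E f"
  shows solution_fix_parents_eq:
      "\<forall>z\<in>Z. solution N f u z = w z \<Longrightarrow> solution N (fix_parents Z w f) u = solution N f u"
    and solution_fix_parents_eq':
      "\<forall>z\<in>Z. solution N (fix_parents Z w f) u z = w z \<Longrightarrow> solution N (fix_parents Z w f) u = solution N f u"
proof -
  have "{(a, b) \<in> E. a \<notin> Z} \<subseteq> E" by auto
  from compatible_mono[OF compatible_fix_parents[OF cp] this]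
  have cp': "compatible N E (fix_parents Z w f)" .
  show "solution N (fix_parents Z w f) u = solution N f u" if "\<forall>z\<in>Z. solution N f u z = w z"
  proof (rule solution_eqI[OF wf EN cp' solution_extensional[OF wf EN cp]], intro ballI)
    fix v assume "v \<in> N"
    then show "solution N f u v = fix_parents Z w f v (solution N f u) (u v)"
      unfolding fix_parents_agrees[OF that] by (rule solution_equation[OF wf EN cp])
  qed
  show "solution N (fix_parents Z w f) u = solution N f u"
    if "\<forall>z\<in>Z. solution N (fix_parents Z w f) u z = w z"
  proof (rule solution_eqI[OF wf EN cp solution_extensional[OF wf EN cp'], symmetric], intro ballI)
    fix v assume "v \<in> N"
    then show "solution N (fix_parents Z w f) u v = f v (solution N (fix_parents Z w f) u) (u v)"
      unfolding fix_parents_agrees[OF that, where f = f, symmetric] by (rule solution_equation[OF wf EN cp'])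
  qed
qed

lemma solution_fix_parents_agree_on_Z:
  assumes "wf E" and "E \<subseteq> N \<times> N" and "compatible N E f"
  shows "(\<forall>z\<in>Z. solution N (fix_parents Z w f) u z = w z) \<longleftrightarrow> (\<forall>z\<in>Z. solution N f u z = w z)"
proof
  assume fixed: "\<forall>z\<in>Z. solution N (fix_parents Z w f) u z = w z"
  then show "\<forall>z\<in>Z. solution N f u z = w z"
    unfolding solution_fix_parents_eq'[OF assms fixed] .
next
  assume factual: "\<forall>z\<in>Z. solution N f u z = w z"
  then show "\<forall>z\<in>Z. solution N (fix_parents Z w f) u z = w z"
    unfolding solution_fix_parents_eq[OF assms factual] .
qed

section \<open>Independent blocks of a product distribution\<close>

definition depends_only_on :: "(('i \<Rightarrow> 'u) \<Rightarrow> 'b) \<Rightarrow> 'i set \<Rightarrow> bool" where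
  "depends_only_on F I \<longleftrightarrow> (\<forall>u u'. (\<forall>i\<in>I. u i = u' i) \<longrightarrow> F u = F u')"

lemma depends_only_on_mono: "depends_only_on F J \<Longrightarrow> J \<subseteq> I \<Longrightarrow> depends_only_on F I"
  unfolding depends_only_on_def by blast

lemma depends_only_on_conj:
  "depends_only_on A I \<Longrightarrow> depends_only_on B I \<Longrightarrow> depends_only_on (\<lambda>u. A u \<and> B u) I"
  unfolding depends_only_on_def by metis

lemma depends_only_on_comp: "depends_only_on F I \<Longrightarrow> depends_only_on (\<lambda>u. g (F u)) I"
  unfolding depends_only_on_def by metis

lemma depends_only_on_Ball:
  "(\<And>i. i \<in> A \<Longrightarrow> depends_only_on (\<lambda>u. P u i) I) \<Longrightarrow> depends_only_on (\<lambda>u. \<forall>i\<in>A. P u i) I"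
  unfolding depends_only_on_def by blast

lemma measure_pmf_prob_pair_Times:
  "measure_pmf.prob (pair_pmf M M') (A \<times> B) = measure_pmf.prob M A * measure_pmf.prob M' B"
proof -
  have "measure_pmf.prob (pair_pmf M M') (A \<times> B) =
      measure_pmf.prob (pair_pmf M M') ((A \<times> B) \<inter> set_pmf (pair_pmf M M'))"
    by (rule measure_Int_set_pmf[symmetric])
  also have "(A \<times> B) \<inter> set_pmf (pair_pmf M M') = (A \<inter> set_pmf M) \<times> (B \<inter> set_pmf M')"
    by auto
  also have "measure_pmf.prob (pair_pmf M M') \<dots> =
      measure_pmf.prob M (A \<inter> set_pmf M) * measure_pmf.prob M' (B \<inter> set_pmf M')"
    by (rule measure_pmf_prob_product) auto
  finally show ?thesis by (simp add: measure_Int_set_pmf)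
qed

lemma prob_Pi_pmf_independent:
  assumes fin: "finite N" and K: "K \<subseteq> N"
    and A: "depends_only_on A K" and B: "depends_only_on B (- K)"
  shows "measure_pmf.prob (Pi_pmf N d P) {u. A u \<and> B u} =
    measure_pmf.prob (Pi_pmf K d P) {u. A u} * measure_pmf.prob (Pi_pmf (N - K) d P) {u. B u}"
proof -
  define merge :: "('a \<Rightarrow> 'b) \<times> ('a \<Rightarrow> 'b) \<Rightarrow> 'a \<Rightarrow> 'b"
    where "merge = (\<lambda>(g, h) i. if i \<in> K then g i else h i)"
  have "Pi_pmf N d P = Pi_pmf (K \<union> (N - K)) d P"
    using K by (simp add: Un_absorb1)
  also have "\<dots> = map_pmf merge (pair_pmf (Pi_pmf K d P) (Pi_pmf (N - K) d P))"
    unfolding merge_def using fin K by (intro Pi_pmf_union) (auto dest: finite_subset)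
  finally have Pi_N: "Pi_pmf N d P = \<dots>" .
  have "A (merge (g, h)) = A g" and "B (merge (g, h)) = B h" for g h
    using A B unfolding depends_only_on_def merge_def by auto
  then have "merge -` {u. A u \<and> B u} = {u. A u} \<times> {u. B u}"
    by auto
  then show ?thesis
    unfolding Pi_N measure_map_pmf by (simp add: measure_pmf_prob_pair_Times)
qed

lemma prob_Pi_pmf_exchange:
  assumes "finite N" and "K \<subseteq> N"
    and "depends_only_on A1 K" "depends_only_on A2 K"
    and "depends_only_on B1 (- K)" "depends_only_on B2 (- K)"
  shows "measure_pmf.prob (Pi_pmf N d P) {u. A1 u \<and> B1 u} *
      measure_pmf.prob (Pi_pmf N d P) {u. A2 u \<and> B2 u} =
    measure_pmf.prob (Pi_pmf N d P) {u. A1 u \<and> B2 u} *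
      measure_pmf.prob (Pi_pmf N d P) {u. A2 u \<and> B1 u}"
  using assms by (simp only: prob_Pi_pmf_independent mult_ac)

section \<open>The twin network\<close>

lemma acyclic_asym: "acyclic E \<Longrightarrow> (a, b) \<in> E \<Longrightarrow> (b, a) \<notin> E"
  by (meson acyclic_def trancl.r_into_trancl trancl_into_trancl2)

lemma twin_edges_trancl:
  assumes "(a, b) \<in> (twin_edges N E X)\<^sup>+"
  shows "(\<exists>v w. a = Fact v \<and> b = Fact w \<and> (v, w) \<in> E\<^sup>+) \<or>
    (\<exists>v w. a = Cf v \<and> b = Cf w \<and> (v, w) \<in> E\<^sup>+) \<or> (\<exists>v. a = Ex v \<and> (\<forall>w. b \<noteq> Ex w))"
  using assms by (induction rule: trancl_induct) (auto simp: twin_edges_def)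

lemma acyclic_twin_edges: "acyclic E \<Longrightarrow> acyclic (twin_edges N E X)"
  unfolding acyclic_def by (auto dest: twin_edges_trancl)

locale selection_twin_network =
  fixes N :: "'v set" and E :: "('v \<times> 'v) set" and X Y S :: 'v and Z :: "'v set"
  assumes finite_N: "finite N" and E_subset: "E \<subseteq> N \<times> N" and acyclic_E: "acyclic E"
    and Y_in_N: "Y \<in> N" and S_in_N: "S \<in> N" and Z_subset: "Z \<subseteq> N"
    and d_sep: "d_separated (twin_edges N E X) {Cf Y} {Fact S} (Fact ` Z)"
begin

abbreviation "T \<equiv> twin_edges N E X"
abbreviation "C \<equiv> Fact ` Z"
abbreviation "E_do \<equiv> {(a, b) \<in> E. b \<noteq> X}"
abbreviation "E_cut \<equiv> {(a, b) \<in> E. a \<notin> Z}"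

definition cut_ancestors :: "'v \<Rightarrow> 'v set" where
  "cut_ancestors v = {a. (a, v) \<in> E_cut\<^sup>*}"

text \<open>\<open>X\<close> is excluded: under \<open>do(X = x)\<close> the equation of \<open>X*\<close> ignores its exogenous
  variable.\<close>
definition Y_sources :: "'v set" where
  "Y_sources = {v. v \<noteq> X \<and> (v, Y) \<in> E_do\<^sup>*}"

text \<open>Given \<open>Z\<close>, the exogenous variables indexed by \<open>Y_side\<close> carry \<open>Y*\<close>, and the
  remaining ones carry \<open>S\<close>.\<close>
inductive_set Y_side :: "'v set" where
  source: "v \<in> Y_sources \<Longrightarrow> v \<in> Y_side"
| linked: "a \<in> Y_side \<Longrightarrow> z \<in> Z \<Longrightarrow> a \<in> cut_ancestors z \<Longrightarrow> b \<in> cut_ancestors z \<Longrightarrow>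
    b \<in> Y_side"

lemma acyclic_T: "acyclic T"
  using acyclic_twin_edges[OF acyclic_E] .

definition reach :: "'v tnode \<Rightarrow> 'v tnode \<Rightarrow> bool" where
  "reach p t \<longleftrightarrow> (\<exists>ps. hd (ps @ [p]) = Cf Y \<and> active_walk T C (ps @ [p, t]))"

lemma reach_start: "adjacent T (Cf Y) t \<Longrightarrow> reach (Cf Y) t"
  unfolding reach_def by (intro exI[of _ "[]"]) simp

lemma reach_step:
  assumes "reach p t" and "adjacent T t q" and "open_triple T C p t q"
  shows "reach t q"
proof -
  from assms(1) obtain ps where "hd (ps @ [p]) = Cf Y" and "active_walk T C (ps @ [p, t])"
    unfolding reach_def by blast
  with assms(2,3) show ?thesis
    unfolding reach_def
    by (intro exI[of _ "ps @ [p]"]) (auto simp: active_walk_snoc hd_append)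
qed

lemma not_reach_S: "\<not> reach p (Fact S)"
proof
  assume "reach p (Fact S)"
  then obtain ps where start: "hd (ps @ [p]) = Cf Y" and walk: "active_walk T C (ps @ [p, Fact S])"
    unfolding reach_def by blast
  from active_walk_imp_active_path[OF acyclic_T walk] obtain ps' where
    "active_path T C ps'" "hd ps' = hd (ps @ [p, Fact S])" "last ps' = Fact S"
    by auto
  moreover have "hd (ps @ [p, Fact S]) = Cf Y"
    using start by (cases ps) auto
  ultimately show False using d_sep
    unfolding d_separated_def by auto
qed

definition upward_from_Y :: "'v \<Rightarrow> bool" where
  "upward_from_Y v \<longleftrightarrow> v = Y \<or> (\<exists>p. reach p (Cf v) \<and> (Cf v, p) \<in> T)"

lemma reach_Cf_parent:
  assumes "upward_from_Y v" and "(q, Cf v) \<in> T"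
  shows "reach (Cf v) q"
  using assms acyclic_asym[OF acyclic_T]
  by (auto simp: upward_from_Y_def adjacent_def open_triple_def intro: reach_start reach_step)

lemma upward_from_Y_E_do: "(v, Y) \<in> E_do\<^sup>* \<Longrightarrow> upward_from_Y v"
proof (induction rule: converse_rtrancl_induct)
  case base
  then show ?case by (simp add: upward_from_Y_def)
next
  case (step v c)
  then have "(Cf v, Cf c) \<in> T" by (auto simp: twin_edges_def)
  with step.IH reach_Cf_parent show ?case
    unfolding upward_from_Y_def by blast
qed

text \<open>An active walk from \<open>Cf Y\<close> reaches \<open>Fact a\<close> in such a way that it stays active when
  continued to a child (\<open>open_below\<close>) or to a parent (\<open>open_above\<close>) of \<open>Fact a\<close>.\<close>

definition open_below :: "'v \<Rightarrow> bool" where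
  "open_below a \<longleftrightarrow> (\<exists>p. reach p (Fact a) \<and> ((p, Fact a) \<in> T \<or> a \<notin> Z))"

definition open_above :: "'v \<Rightarrow> bool" where
  "open_above a \<longleftrightarrow> (\<exists>p. reach p (Fact a) \<and> ((p, Fact a) \<in> T \<longleftrightarrow> a \<in> Z))"

lemma open_below_source:
  assumes "v \<noteq> X" and "(v, Y) \<in> E_do\<^sup>*"
  shows "open_below v"
proof -
  have "v \<in> N"
    using assms(2) Y_in_N E_subset by (induction rule: converse_rtrancl_induct) auto
  with assms have Ex_Cf: "(Ex v, Cf v) \<in> T" and Ex_Fact: "(Ex v, Fact v) \<in> T"
    by (auto simp: twin_edges_def)
  have "reach (Cf v) (Ex v)"
    using reach_Cf_parent[OF upward_from_Y_E_do[OF assms(2)] Ex_Cf] .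
  then have "reach (Ex v) (Fact v)"
  proof (rule reach_step)
    show "adjacent T (Ex v) (Fact v)"
      using Ex_Fact by (simp add: adjacent_def)
    have "(Cf v, Ex v) \<notin> T"
      by (simp add: twin_edges_def)
    then show "open_triple T C (Cf v) (Ex v) (Fact v)"
      by (auto simp: open_triple_def)
  qed
  with Ex_Fact show ?thesis
    unfolding open_below_def by blast
qed

lemma open_below_child:
  assumes "open_below a" and "(a, b) \<in> E_cut"
  shows "open_below b"
proof -
  have edge: "(Fact a, Fact b) \<in> T" using assms(2) by (auto simp: twin_edges_def)
  have "(Fact b, Fact a) \<notin> T" using acyclic_asym[OF acyclic_T edge] .
  moreover from assms(1) obtain p where "reach p (Fact a)" unfolding open_below_def by blast
  ultimately have "reach (Fact a) (Fact b)"
    using assms(2) edge reach_step[of p "Fact a" "Fact b"] by (auto simp: adjacent_def open_triple_def)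
  with edge show ?thesis unfolding open_below_def by blast
qed

lemma open_above_parent:
  assumes "open_above b" and "(a, b) \<in> E_cut"
  shows "open_above a"
proof -
  have edge: "(Fact a, Fact b) \<in> T" using assms(2) by (auto simp: twin_edges_def)
  from assms(1) obtain p where p: "reach p (Fact b)" "(p, Fact b) \<in> T \<longleftrightarrow> b \<in> Z"
    unfolding open_above_def by blast
  have "open_triple T C p (Fact b) (Fact a)"
  proof (cases "b \<in> Z")
    case True
    then have "has_descendant_in T C (Fact b)"
      unfolding has_descendant_in_def by blast
    with True p(2) edge show ?thesis by (simp add: open_triple_def)
  next
    case False
    then show ?thesis using p(2) by (auto simp: open_triple_def)
  qed
  with edge have "reach (Fact b) (Fact a)"
    by (intro reach_step[OF p(1)]) (simp_all add: adjacent_def)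
  moreover have "(Fact b, Fact a) \<notin> T" using acyclic_asym[OF acyclic_T edge] .
  ultimately show ?thesis
    using assms(2) unfolding open_above_def by auto
qed

lemma open_below_descendant:
  assumes "(a, b) \<in> E_cut\<^sup>*" and "open_below a"
  shows "open_below b"
  using assms(1)
proof (induction rule: rtrancl_induct)
  case (step b c)
  then show ?case using open_below_child by blast
qed (fact assms(2))

lemma open_above_ancestor:
  assumes "(a, b) \<in> E_cut\<^sup>*" and "open_above b"
  shows "open_above a"
  using assms(1)
proof (induction rule: converse_rtrancl_induct)
  case (step a c)
  then show ?case using open_above_parent by blast
qed (fact assms(2))

lemma Y_side_open_below: "v \<in> Y_side \<Longrightarrow> open_below v"
proof (induction rule: Y_side.induct)
  case (source v)
  then show ?case by (simp add: Y_sources_def open_below_source)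
next
  case (linked a z b)
  then have "open_below z"
    using open_below_descendant by (simp add: cut_ancestors_def)
  with \<open>z \<in> Z\<close> have "open_above z"
    unfolding open_below_def open_above_def by blast
  with linked.hyps have "open_above b"
    using open_above_ancestor by (simp add: cut_ancestors_def)
  then show ?case
    unfolding open_below_def open_above_def by blast
qed

lemma cut_ancestors_S_disjoint: "cut_ancestors S \<inter> Y_side = {}"
proof -
  have "\<not> open_below S"
    using not_reach_S unfolding open_below_def by blast
  then show ?thesis
    using Y_side_open_below open_below_descendant unfolding cut_ancestors_def by blast
qed

lemma cut_ancestors_Z_inside_or_disjoint:
  "z \<in> Z \<Longrightarrow> cut_ancestors z \<subseteq> Y_side \<or> cut_ancestors z \<inter> Y_side = {}"
  by (blast intro: Y_side.linked)

lemma Y_side_subset: "Y_side \<subseteq> N"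
proof
  fix v assume "v \<in> Y_side"
  then show "v \<in> N"
  proof (induction rule: Y_side.induct)
    case (source v)
    then have "(v, Y) \<in> E_do\<^sup>*" by (simp add: Y_sources_def)
    then show ?case using Y_in_N E_subset by (induction rule: converse_rtrancl_induct) auto
  next
    case (linked a z b)
    then show ?case using Z_subset E_subset unfolding cut_ancestors_def
      by (auto elim: converse_rtranclE)
  qed
qed

section \<open>Independence of the counterfactual outcome and the selection given Z\<close>

lemma wf_E: "wf E"
proof -
  have "finite E" using finite_subset[OF E_subset] finite_N by blast
  then show ?thesis using acyclic_E by (rule finite_acyclic_wf)
qed

lemma cf_outcome_depends_only_on_Y_side:
  fixes f :: "'v \<Rightarrow> ('v \<Rightarrow> 'a) \<Rightarrow> 'u \<Rightarrow> 'a"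
  assumes "compatible N E f"
  shows "depends_only_on (\<lambda>u. solution N (do_eq X x f) u Y) Y_side"
  unfolding depends_only_on_def
proof (intro allI impI)
  fix u u' :: "'v \<Rightarrow> 'u" assume agree: "\<forall>v\<in>Y_side. u v = u' v"
  show "solution N (do_eq X x f) u Y = solution N (do_eq X x f) u' Y"
  proof (rule solution_cong_ancestors)
    show "wf E_do" by (rule wf_subset[OF wf_E]) auto
    show "E_do \<subseteq> N \<times> N" using E_subset by auto
    show "compatible N E_do (do_eq X x f)" by (rule compatible_do_eq[OF assms])
    show "\<forall>a. (a, Y) \<in> E_do\<^sup>* \<longrightarrow> (\<forall>w. do_eq X x f a w (u a) = do_eq X x f a w (u' a))"
    proof (intro allI impI)
      fix a w assume "(a, Y) \<in> E_do\<^sup>*"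
      show "do_eq X x f a w (u a) = do_eq X x f a w (u' a)"
      proof (cases "a = X")
        case False
        with \<open>(a, Y) \<in> E_do\<^sup>*\<close> have "a \<in> Y_side"
          by (intro Y_side.source) (simp add: Y_sources_def)
        with agree show ?thesis by simp
      qed (simp add: do_eq_def)
    qed
  qed (rule Y_in_N)
qed

lemma fixed_solution_depends_only_on:
  fixes f :: "'v \<Rightarrow> ('v \<Rightarrow> 'a) \<Rightarrow> 'u \<Rightarrow> 'a"
  assumes "compatible N E f" and "v \<in> N" and "cut_ancestors v \<subseteq> I"
  shows "depends_only_on (\<lambda>u. solution N (fix_parents Z w f) u v) I"
  unfolding depends_only_on_def
proof (intro allI impI)
  fix u u' :: "'v \<Rightarrow> 'u" assume agree: "\<forall>a\<in>I. u a = u' a"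
  show "solution N (fix_parents Z w f) u v = solution N (fix_parents Z w f) u' v"
  proof (rule solution_cong_ancestors)
    show "wf E_cut" by (rule wf_subset[OF wf_E]) auto
    show "E_cut \<subseteq> N \<times> N" using E_subset by auto
    show "compatible N E_cut (fix_parents Z w f)" by (rule compatible_fix_parents[OF assms(1)])
    show "\<forall>a. (a, v) \<in> E_cut\<^sup>* \<longrightarrow>
        (\<forall>s. fix_parents Z w f a s (u a) = fix_parents Z w f a s (u' a))"
      using agree assms(3) by (auto simp: cut_ancestors_def)
  qed (rule assms(2))
qed

text \<open>On the event \<open>Z = w\<close> the factual world is the solution of \<open>fix_parents Z w f\<close>. There
  \<open>Y*\<close> and the equations \<open>z = w z\<close> for \<open>z\<close> with cut ancestors in \<open>Y_side\<close> depend only on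
  the exogenous variables in \<open>Y_side\<close>, while \<open>S\<close> and the other equations depend only on the
  rest.\<close>
lemma cf_outcome_indep_S_given_Z:
  fixes f :: "'v \<Rightarrow> ('v \<Rightarrow> 'a) \<Rightarrow> 'u \<Rightarrow> 'a" and Pu :: "'v \<Rightarrow> 'u pmf" and x :: 'a
  assumes cp: "compatible N E f"
  defines "P \<equiv> \<lambda>A. measure_pmf.prob (twin_dist N Pu f X x) {p. A p}"
  shows "P (\<lambda>p. snd p Y = y \<and> (\<forall>v\<in>Z. fst p v = w v) \<and> fst p S = s) *
      P (\<lambda>p. \<forall>v\<in>Z. fst p v = w v) =
    P (\<lambda>p. snd p Y = y \<and> (\<forall>v\<in>Z. fst p v = w v)) *
      P (\<lambda>p. (\<forall>v\<in>Z. fst p v = w v) \<and> fst p S = s)"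
proof -
  define cs where "cs u = solution N (fix_parents Z w f) u" for u
  define ZA where "ZA = {z \<in> Z. cut_ancestors z \<subseteq> Y_side}"
  define Z_inside where "Z_inside u \<longleftrightarrow> (\<forall>z\<in>ZA. cs u z = w z)" for u
  define Z_outside where "Z_outside u \<longleftrightarrow> (\<forall>z\<in>Z - ZA. cs u z = w z)" for u
  define Y_event where "Y_event u \<longleftrightarrow> solution N (do_eq X x f) u Y = y" for u
  define S_event where "S_event u \<longleftrightarrow> cs u S = s" for u
  have E: "wf E" "E \<subseteq> N \<times> N" by (fact wf_E, fact E_subset)
  have Z_event: "(\<forall>z\<in>Z. solution N f u z = w z) \<longleftrightarrow> Z_inside u \<and> Z_outside u" for u
    unfolding Z_inside_def Z_outside_def cs_def solution_fix_parents_agree_on_Z[OF E cp, symmetric]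
    by (auto simp: ZA_def)
  have S_eq: "solution N f u S = cs u S" if "\<forall>z\<in>Z. solution N f u z = w z" for u
    using solution_fix_parents_eq[OF E cp that] by (simp add: cs_def)
  have "depends_only_on Z_inside Y_side"
    unfolding Z_inside_def cs_def using Z_subset
    by (intro depends_only_on_Ball depends_only_on_comp[where g = "\<lambda>c. c = _"]
        fixed_solution_depends_only_on[OF cp]) (auto simp: ZA_def)
  moreover have "depends_only_on Z_outside (- Y_side)"
    unfolding Z_outside_def cs_def using Z_subset cut_ancestors_Z_inside_or_disjoint
    by (intro depends_only_on_Ball depends_only_on_comp[where g = "\<lambda>c. c = _"]
        fixed_solution_depends_only_on[OF cp]) (auto simp: ZA_def)
  moreover have "depends_only_on Y_event Y_side"
    unfolding Y_event_def by (rule depends_only_on_comp[OF cf_outcome_depends_only_on_Y_side[OF cp]])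
  moreover have "depends_only_on S_event (- Y_side)"
    unfolding S_event_def cs_def using S_in_N cut_ancestors_S_disjoint
    by (intro depends_only_on_comp[where g = "\<lambda>c. c = s"] fixed_solution_depends_only_on[OF cp]) auto
  ultimately have
    "measure_pmf.prob (exo_dist N Pu) {u. (Y_event u \<and> Z_inside u) \<and> (Z_outside u \<and> S_event u)} *
       measure_pmf.prob (exo_dist N Pu) {u. Z_inside u \<and> Z_outside u} =
     measure_pmf.prob (exo_dist N Pu) {u. (Y_event u \<and> Z_inside u) \<and> Z_outside u} *
       measure_pmf.prob (exo_dist N Pu) {u. Z_inside u \<and> (Z_outside u \<and> S_event u)}"
    unfolding exo_dist_def
    by (intro prob_Pi_pmf_exchange[OF finite_N Y_side_subset] depends_only_on_conj)
  then show ?thesis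
    using Z_event S_eq
    by (simp add: P_def twin_dist_def vimage_def Y_event_def S_event_def conj_ac cong: conj_cong)
qed

end

section \<open>Recovering the experimental distribution\<close>

lemma measure_pmf_prob_sum_fibres:
  assumes "finite I" and "\<And>p. Q p \<Longrightarrow> g p \<in> I"
  shows "measure_pmf.prob M {p. Q p} = (\<Sum>i\<in>I. measure_pmf.prob M {p. Q p \<and> g p = i})"
proof -
  have "{p. Q p} = (\<Union>i\<in>I. {p. Q p \<and> g p = i})"
    using assms(2) by auto
  then show ?thesis
    by (simp only:) (rule measure_pmf.finite_measure_finite_Union; auto simp: assms disjoint_family_on_def)
qed

lemma P_Z_eq_twin:
  "P_Z N Pu f Z z = measure_pmf.prob (twin_dist N Pu f X x) {p. \<forall>v\<in>Z. fst p v = z v}"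
  by (simp add: P_Z_def obs_dist_def twin_dist_def vimage_def)

lemma P_ZS_eq_twin:
  "P_ZS N Pu f Z S s1 z =
     measure_pmf.prob (twin_dist N Pu f X x) {p. (\<forall>v\<in>Z. fst p v = z v) \<and> fst p S = s1}"
  by (simp add: P_ZS_def obs_dist_def twin_dist_def vimage_def)

definition adjustment_from_biased ::
  "'v set \<Rightarrow> ('a::finite \<Rightarrow> 'a \<Rightarrow> ('v \<Rightarrow> 'a) \<Rightarrow> real) \<Rightarrow> (('v \<Rightarrow> 'a) \<Rightarrow> real) \<Rightarrow> 'a \<Rightarrow> 'a \<Rightarrow> real"
where
  "adjustment_from_biased Z Pb PZ x y =
    (\<Sum>z \<in> PiE Z (\<lambda>_. UNIV). if PZ z = 0 then 0 else Pb x y z / (\<Sum>y'\<in>UNIV. Pb x y' z) * PZ z)"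

lemma P_exp_cond_ZS_eq_biased_ratio:
  fixes s1 :: "'a::finite"
  assumes "admissible N E Z S s1 Pu f" and "P_Z N Pu f Z z > 0"
  shows "P_exp_cond_ZS N Pu f X Y Z S s1 x y z =
    P_biased N Pu f X Y Z S s1 x y z / (\<Sum>y'\<in>UNIV. P_biased N Pu f X Y Z S s1 x y' z)"
proof -
  let ?T = "twin_dist N Pu f X x"
  define joint where
    "joint y' = measure_pmf.prob ?T {p. snd p Y = y' \<and> (\<forall>v\<in>Z. fst p v = z v) \<and> fst p S = s1}" for y'
  define ZS where "ZS = measure_pmf.prob ?T {p. (\<forall>v\<in>Z. fst p v = z v) \<and> fst p S = s1}"
  define S1 where "S1 = measure_pmf.prob ?T {p. fst p S = s1}"
  have "P_ZS N Pu f Z S s1 z > 0"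
    using assms by (simp add: admissible_def positive_def)
  then have "ZS > 0"
    by (simp add: P_ZS_eq_twin[where X = X and x = x] ZS_def)
  moreover have "ZS \<le> S1"
    unfolding ZS_def S1_def by (rule measure_pmf.finite_measure_mono) auto
  moreover have "ZS = (\<Sum>y'\<in>UNIV. joint y')"
  proof -
    have "ZS = (\<Sum>y'\<in>UNIV.
        measure_pmf.prob ?T {p. ((\<forall>v\<in>Z. fst p v = z v) \<and> fst p S = s1) \<and> snd p Y = y'})"
      unfolding ZS_def by (rule measure_pmf_prob_sum_fibres) auto
    also have "\<dots> = (\<Sum>y'\<in>UNIV. joint y')"
      unfolding joint_def by (intro sum.cong refl arg_cong[where f = "measure_pmf.prob ?T"]) auto
    finally show ?thesis .
  qed
  ultimately show ?thesis
    by (simp add: P_exp_cond_ZS_def P_biased_def joint_def [symmetric] ZS_def [symmetric]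
        S1_def [symmetric] flip: sum_divide_distrib)
qed

lemma adjustment_term_eq_biased:
  fixes s1 :: "'a::finite"
  assumes "admissible N E Z S s1 Pu f"
  shows "P_exp_cond_ZS N Pu f X Y Z S s1 x y z * P_Z N Pu f Z z =
    (if P_Z N Pu f Z z = 0 then 0
     else P_biased N Pu f X Y Z S s1 x y z / (\<Sum>y'\<in>UNIV. P_biased N Pu f X Y Z S s1 x y' z)
       * P_Z N Pu f Z z)"
  using P_exp_cond_ZS_eq_biased_ratio[OF assms] measure_nonneg[of _ "{w. \<forall>v\<in>Z. w v = z v}"]
  by (auto simp: P_Z_def less_le)

context selection_twin_network
begin

lemma P_exp_Z_eq_adjustment_term:
  fixes s1 :: "'a::finite" and f :: "'v \<Rightarrow> ('v \<Rightarrow> 'a) \<Rightarrow> 'u \<Rightarrow> 'a"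
  assumes adm: "admissible N E Z S s1 Pu f"
  shows "measure_pmf.prob (twin_dist N Pu f X x) {p. snd p Y = y \<and> (\<forall>v\<in>Z. fst p v = z v)} =
    P_exp_cond_ZS N Pu f X Y Z S s1 x y z * P_Z N Pu f Z z"
proof -
  let ?T = "twin_dist N Pu f X x"
  define YZ where "YZ = measure_pmf.prob ?T {p. snd p Y = y \<and> (\<forall>v\<in>Z. fst p v = z v)}"
  define YZS where
    "YZS = measure_pmf.prob ?T {p. snd p Y = y \<and> (\<forall>v\<in>Z. fst p v = z v) \<and> fst p S = s1}"
  define ZS where "ZS = measure_pmf.prob ?T {p. (\<forall>v\<in>Z. fst p v = z v) \<and> fst p S = s1}"
  have P_Z: "P_Z N Pu f Z z = measure_pmf.prob ?T {p. \<forall>v\<in>Z. fst p v = z v}"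
    by (rule P_Z_eq_twin)
  have indep: "YZS * P_Z N Pu f Z z = YZ * ZS"
    unfolding P_Z YZS_def YZ_def ZS_def
    using adm by (intro cf_outcome_indep_S_given_Z) (simp add: admissible_def)
  have cond: "P_exp_cond_ZS N Pu f X Y Z S s1 x y z = YZS / ZS"
    by (simp add: P_exp_cond_ZS_def YZS_def ZS_def)
  show ?thesis
  proof (cases "P_Z N Pu f Z z > 0")
    case True
    with adm have "P_ZS N Pu f Z S s1 z > 0"
      by (simp add: admissible_def positive_def)
    then have "ZS > 0"
      by (simp add: P_ZS_eq_twin[where X = X and x = x] ZS_def)
    with indep show ?thesis
      by (simp add: cond YZ_def [symmetric] field_simps)
  next
    case False
    moreover have "YZ \<le> P_Z N Pu f Z z"
      unfolding YZ_def P_Z by (rule measure_pmf.finite_measure_mono) auto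
    moreover have "0 \<le> YZ" "0 \<le> P_Z N Pu f Z z"
      by (simp_all add: YZ_def P_Z)
    ultimately show ?thesis
      by (simp add: YZ_def [symmetric])
  qed
qed

lemma P_exp_eq_adjustment:
  fixes s1 :: "'a::finite" and f :: "'v \<Rightarrow> ('v \<Rightarrow> 'a) \<Rightarrow> 'u \<Rightarrow> 'a"
  assumes adm: "admissible N E Z S s1 Pu f"
  shows "P_exp N Pu f X Y x y =
    (\<Sum>z \<in> PiE Z (\<lambda>_. UNIV). P_exp_cond_ZS N Pu f X Y Z S s1 x y z * P_Z N Pu f Z z)"
proof -
  let ?T = "twin_dist N Pu f X x"
  have "finite (PiE Z (\<lambda>_. UNIV :: 'a set))"
    using finite_subset[OF Z_subset finite_N] by (simp add: finite_PiE)
  then have "P_exp N Pu f X Y x y =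
      (\<Sum>z \<in> PiE Z (\<lambda>_. UNIV). measure_pmf.prob ?T {p. snd p Y = y \<and> restrict (fst p) Z = z})"
    unfolding P_exp_def by (rule measure_pmf_prob_sum_fibres) auto
  also have "\<dots> = (\<Sum>z \<in> PiE Z (\<lambda>_. UNIV).
      measure_pmf.prob ?T {p. snd p Y = y \<and> (\<forall>v\<in>Z. fst p v = z v)})"
  proof (rule sum.cong [OF refl])
    fix z assume "z \<in> PiE Z (\<lambda>_. UNIV :: 'a set)"
    then have "restrict a Z = z \<longleftrightarrow> (\<forall>v\<in>Z. a v = z v)" for a
      by (auto simp: PiE_def extensional_def fun_eq_iff)
    then show "measure_pmf.prob ?T {p. snd p Y = y \<and> restrict (fst p) Z = z} =
        measure_pmf.prob ?T {p. snd p Y = y \<and> (\<forall>v\<in>Z. fst p v = z v)}"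
      by simp
  qed
  also have "\<dots> = (\<Sum>z \<in> PiE Z (\<lambda>_. UNIV). P_exp_cond_ZS N Pu f X Y Z S s1 x y z * P_Z N Pu f Z z)"
    using P_exp_Z_eq_adjustment_term[OF adm] by simp
  finally show ?thesis .
qed

lemma P_exp_eq_adjustment_from_biased:
  fixes s1 :: "'a::finite" and f :: "'v \<Rightarrow> ('v \<Rightarrow> 'a) \<Rightarrow> 'u \<Rightarrow> 'a"
  assumes "admissible N E Z S s1 Pu f"
  shows "P_exp N Pu f X Y x y =
    adjustment_from_biased Z (P_biased N Pu f X Y Z S s1) (P_Z N Pu f Z) x y"
  using assms
  by (simp add: P_exp_eq_adjustment adjustment_term_eq_biased adjustment_from_biased_def)

end

theorem theorem2:
  fixes N :: "'v set" and E :: "('v \<times> 'v) set" and X Y S :: 'v and Z :: "'v set"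
    and s1 :: "'a::finite"
  assumes "finite N" and "E \<subseteq> N \<times> N" and "acyclic E"
    and "X \<in> N" and "Y \<in> N" and "S \<in> N" and "X \<noteq> S" and "Y \<noteq> S"
    and "\<forall>v. (S, v) \<notin> E"
    and "Z \<subseteq> N - {S}"
    and "d_separated (twin_edges N E X) {Cf Y} {Fact S} (Fact ` Z)"
  shows "s_recoverable TYPE('u) N E X Y Z S s1 \<and>
    (\<forall>(Pu :: 'v \<Rightarrow> 'u pmf) f. admissible N E Z S s1 Pu f \<longrightarrow>
       (\<forall>x y. P_exp N Pu f X Y x y =
          (\<Sum>z \<in> PiE Z (\<lambda>_. UNIV). P_exp_cond_ZS N Pu f X Y Z S s1 x y z * P_Z N Pu f Z z)))"
proof -
  interpret selection_twin_network N E X Y S Z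
    using assms by unfold_locales auto
  have "s_recoverable TYPE('u) N E X Y Z S s1"
    unfolding s_recoverable_def
  proof (intro allI impI, elim conjE)
    fix Pu1 Pu2 :: "'v \<Rightarrow> 'u pmf" and f1 f2 x y
    assume adm: "admissible N E Z S s1 Pu1 f1" "admissible N E Z S s1 Pu2 f2"
      and "\<forall>x y z. P_biased N Pu1 f1 X Y Z S s1 x y z = P_biased N Pu2 f2 X Y Z S s1 x y z"
      and "\<forall>z. P_Z N Pu1 f1 Z z = P_Z N Pu2 f2 Z z"
    then have "P_biased N Pu1 f1 X Y Z S s1 = P_biased N Pu2 f2 X Y Z S s1"
      and "P_Z N Pu1 f1 Z = P_Z N Pu2 f2 Z"
      by (simp_all add: fun_eq_iff)
    with adm show "P_exp N Pu1 f1 X Y x y = P_exp N Pu2 f2 X Y x y"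
      by (simp add: P_exp_eq_adjustment_from_biased)
  qed
  then show ?thesis
    using P_exp_eq_adjustment by blast
qed

end
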